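(* Fix a constant $\epsilon\in(0,1)$. For every directed graph $G=(V,E)$ on $n$ nodes, every state $\mathcal{S}$ with no red nodes, and every integer $k$ with $1\le k\le|V\setminus\mathcal{S}^b|$, the set $A$ returned by the Monte Carlo Greedy Algorithm satisfies, with probability $1-o(1)$ as $n\to\infty$ (uniformly over $G,\mathcal{S},k$), $\mathcal{F}_{\mathcal{S}}(A)\ge\left(1-\frac1e-\epsilon\right)\max\{\mathcal{F}_{\mathcal{S}}(A'):|A'|\le k,\ A'\cap\mathcal{S}^b=\emptyset\}$.
   Context: A state is a map $\mathcal{S}:V\to\{b,r,u\}$ (blue, red, uncolored); colored means blue or red; $\mathcal{S}^b$ is the set of blue nodes. The \textsc{Random Pick} process: in each round every node $v$ with at least one out-neighbor picks an out-neighbor $ps_t(v)$ uniformly at random, independently; $\mathcal{S}_t(v)=\mathcal{S}_{t-1}(ps_t(v))$ if $\mathcal{S}_{t-1}(v)=u$ and $\mathcal{S}_{t-1}(ps_t(v))\ne u$, else $\mathcal{S}_t(v)=\mathcal{S}_{t-1}(v)$; it almost surely reaches a stable state (no uncolored node has a colored out-neighbor). $\mathcal{F}_{\mathcal{S}}(A)$ is the expected number of red nodes in the final stable state when starting from $\mathcal{S}$ with the nodes of $A\subseteq V\setminus\mathcal{S}^b$ recolored red. Monte Carlo Greedy Algorithm: let $R=\lceil 27nk^2\ln(n^3)/\epsilon^2\rceil$; for a set $B$, $Est_{\mathcal{S}}(B)$ is the average, over $R$ independent simulations of the process run to its stable state from $\mathcal{S}$ with $B$ recolored red, of the final number of red nodes.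 Start with $A=\emptyset$; for $i=1,\dots,k$, choose $v\in(V\setminus\mathcal{S}^b)\setminus A$ maximizing $Est_{\mathcal{S}}(A\cup\{v\})$ (ties broken arbitrarily, fresh independent simulations for each evaluation) and set $A\leftarrow A\cup\{v\}$; return $A$. *)

theory Defs
  imports "HOL-Probability.Probability"
begin

datatype color = Blue | Red | Unc

type_synonym state = "nat \<Rightarrow> color"

text \<open>A directed graph on n nodes has vertex set {..<n} and edge relation
  E \<subseteq> {..<n} \<times> {..<n}.  out-neighbours of v:\<close>
definition out_nbrs :: "(nat \<times> nat) set \<Rightarrow> nat \<Rightarrow> nat set" where
  "out_nbrs E v = {w. (v, w) \<in> E}"

definition blue_set :: "nat \<Rightarrow> state \<Rightarrow> nat set" where
  "blue_set n S = {v \<in> {..<n}. S v = Blue}"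

definition red_count :: "nat \<Rightarrow> state \<Rightarrow> real" where
  "red_count n S = real (card {v \<in> {..<n}. S v = Red})"

definition recolor :: "state \<Rightarrow> nat set \<Rightarrow> state" where
  "recolor S A = (\<lambda>v. if v \<in> A then Red else S v)"

definition pick_pmf :: "nat \<Rightarrow> (nat \<times> nat) set \<Rightarrow> (nat \<Rightarrow> nat) pmf" where
  "pick_pmf n E = Pi_pmf {v \<in> {..<n}. out_nbrs E v \<noteq> {}} 0 (\<lambda>v. pmf_of_set (out_nbrs E v))"

definition step_pmf :: "nat \<Rightarrow> (nat \<times> nat) set \<Rightarrow> state \<Rightarrow> state pmf" where
  "step_pmf n E S = map_pmf
     (\<lambda>p v. if v < n \<and> out_nbrs E v \<noteq> {} \<and> S v = Unc \<and> S (p v) \<noteq> Unc then S (p v) else S v)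
     (pick_pmf n E)"

definition run_pmf :: "nat \<Rightarrow> (nat \<times> nat) set \<Rightarrow> nat \<Rightarrow> state \<Rightarrow> state pmf" where
  "run_pmf n E t S = ((\<lambda>M. bind_pmf M (step_pmf n E)) ^^ t) (return_pmf S)"

text \<open>Distribution of the final (stable) state: the process almost surely gets
  absorbed in a stable state, so the t-round distributions converge pointwise.\<close>
definition final_pmf :: "nat \<Rightarrow> (nat \<times> nat) set \<Rightarrow> state \<Rightarrow> state pmf" where
  "final_pmf n E S = embed_pmf (\<lambda>s. lim (\<lambda>t. pmf (run_pmf n E t S) s))"

definition F :: "nat \<Rightarrow> (nat \<times> nat) set \<Rightarrow> state \<Rightarrow> nat set \<Rightarrow> real" where
  "F n E S A = measure_pmf.expectation (final_pmf n E (recolor S A)) (red_count n)"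

definition OPT :: "nat \<Rightarrow> (nat \<times> nat) set \<Rightarrow> state \<Rightarrow> nat \<Rightarrow> real" where
  "OPT n E S k = Max {F n E S A' | A'. A' \<subseteq> {..<n} \<and> card A' \<le> k \<and> A' \<inter> blue_set n S = {}}"

definition num_sims :: "nat \<Rightarrow> nat \<Rightarrow> real \<Rightarrow> nat" where
  "num_sims n k \<epsilon> = nat \<lceil>27 * real n * real k ^ 2 * ln (real n ^ 3) / \<epsilon> ^ 2\<rceil>"

definition est_pmf :: "nat \<Rightarrow> (nat \<times> nat) set \<Rightarrow> state \<Rightarrow> nat \<Rightarrow> nat set \<Rightarrow> real pmf" where
  "est_pmf n E S R B = map_pmf (\<lambda>xs. (\<Sum>i<R. red_count n (xs i)) / real R)
     (Pi_pmf {..<R} (\<lambda>_. Unc) (\<lambda>_. final_pmf n E (recolor S B)))"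

definition valid_tiebreak :: "nat set \<Rightarrow> (nat set \<Rightarrow> (nat \<Rightarrow> real) \<Rightarrow> nat) \<Rightarrow> bool" where
  "valid_tiebreak C tb = (\<forall>A e. C - A \<noteq> {} \<longrightarrow>
      tb A e \<in> C - A \<and> (\<forall>w \<in> C - A. e w \<le> e (tb A e)))"

definition greedy_step :: "nat \<Rightarrow> (nat \<times> nat) set \<Rightarrow> state \<Rightarrow> nat \<Rightarrow>
    (nat set \<Rightarrow> (nat \<Rightarrow> real) \<Rightarrow> nat) \<Rightarrow> nat set \<Rightarrow> nat set pmf" where
  "greedy_step n E S R tb A =
     map_pmf (\<lambda>e. A \<union> {tb A e})
       (Pi_pmf (({..<n} - blue_set n S) - A) 0 (\<lambda>v. est_pmf n E S R (A \<union> {v})))"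

definition greedy_pmf :: "nat \<Rightarrow> (nat \<times> nat) set \<Rightarrow> state \<Rightarrow> nat \<Rightarrow> real \<Rightarrow>
    (nat set \<Rightarrow> (nat \<Rightarrow> real) \<Rightarrow> nat) \<Rightarrow> nat set pmf" where
  "greedy_pmf n E S k \<epsilon> tb =
     ((\<lambda>M. bind_pmf M (greedy_step n E S (num_sims n k \<epsilon>) tb)) ^^ k) (return_pmf {})"

end

theory Submission
  imports Defs
begin

text \<open>
  The Random Pick process is driven by the sequence of picks; running the same picks from
  different initial states couples the processes.  Under this coupling, colouring more
  nodes red only adds red nodes at every round, and the red nodes obtained from
  \<open>X \<union> Y\<close> are among those obtained from \<open>X\<close> or from \<open>Y\<close>.  Taking expectations and passing to
  the limit, \<open>F\<^sub>S\<close> is monotone and submodular, and \<open>F\<^sub>S(B) \<ge> |B|\<close>.  The latter makes every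
  estimated value at least 1, so a multiplicative Chernoff bound with \<open>R\<close> samples of
  values in \<open>[0, n]\<close> makes every estimate used by the algorithm accurate up to a factor
  \<open>1 \<plusminus> \<epsilon>/(2k)\<close> except with probability \<open>O(n\<^sup>-\<^sup>5)\<close> each.  On that event each greedy step
  shrinks the gap to the optimum by a factor \<open>1 - 1/k\<close> up to an additive \<open>\<epsilon>/k \<cdot> OPT\<close>, and
  after \<open>k\<close> steps the gap is at most \<open>(1/e + \<epsilon>) OPT\<close>; a union bound over the at most
  \<open>nk\<close> estimates gives failure probability at most \<open>2/n\<close>.
\<close>

section \<open>The process driven by fixed picks\<close>

definition pick_step :: "nat \<Rightarrow> (nat \<times> nat) set \<Rightarrow> (nat \<Rightarrow> nat) \<Rightarrow> state \<Rightarrow> state" where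
  "pick_step n E p S =
     (\<lambda>v. if v < n \<and> out_nbrs E v \<noteq> {} \<and> S v = Unc \<and> S (p v) \<noteq> Unc then S (p v) else S v)"

definition pick_run :: "nat \<Rightarrow> (nat \<times> nat) set \<Rightarrow> (nat \<Rightarrow> nat) list \<Rightarrow> state \<Rightarrow> state" where
  "pick_run n E ps S = foldl (\<lambda>S p. pick_step n E p S) S ps"

lemma pick_run_Nil [simp]: "pick_run n E [] S = S"
  by (simp add: pick_run_def)

lemma pick_run_snoc [simp]: "pick_run n E (ps @ [p]) S = pick_step n E p (pick_run n E ps S)"
  by (simp add: pick_run_def)

lemma pick_run_outside: "\<not> v < n \<Longrightarrow> pick_run n E ps S v = S v"
  by (induction ps rule: rev_induct) (auto simp: pick_step_def)

lemma pick_run_Red: "S v = Red \<Longrightarrow> pick_run n E ps S v = Red"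
  by (induction ps rule: rev_induct) (auto simp: pick_step_def)

definition red_le :: "state \<Rightarrow> state \<Rightarrow> bool" where
  "red_le a b \<longleftrightarrow> (\<forall>w. a w = Red \<longrightarrow> b w = Red) \<and> (\<forall>w. b w = Blue \<longrightarrow> a w = Blue)
     \<and> (\<forall>w. a w \<noteq> Unc \<longrightarrow> b w \<noteq> Unc)"

definition red_join :: "state \<Rightarrow> state \<Rightarrow> state \<Rightarrow> bool" where
  "red_join a b c \<longleftrightarrow> red_le a c \<and> red_le b c \<and> (\<forall>w. c w = Red \<longrightarrow> a w = Red \<or> b w = Red)"

lemma red_le_pick_step: "red_le a b \<Longrightarrow> red_le (pick_step n E p a) (pick_step n E p b)"
  unfolding red_le_def pick_step_def by (intro conjI allI; metis color.distinct(3,5,6) color.exhaust)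

lemma red_join_pick_step:
  "red_join a b c \<Longrightarrow> red_join (pick_step n E p a) (pick_step n E p b) (pick_step n E p c)"
  unfolding red_join_def
  by (simp add: red_le_pick_step) (metis (no_types, lifting) color.distinct red_le_def pick_step_def)

lemma red_le_pick_run: "red_le a b \<Longrightarrow> red_le (pick_run n E ps a) (pick_run n E ps b)"
  by (induction ps rule: rev_induct) (auto simp: red_le_pick_step)

lemma red_join_pick_run:
  "red_join a b c \<Longrightarrow> red_join (pick_run n E ps a) (pick_run n E ps b) (pick_run n E ps c)"
  by (induction ps rule: rev_induct) (auto simp: red_join_pick_step)

lemma red_le_recolor: "X \<subseteq> Y \<Longrightarrow> red_le (recolor S X) (recolor S Y)"
  unfolding red_le_def recolor_def by auto

lemma red_join_recolor: "red_join (recolor S X) (recolor S Y) (recolor S (X \<union> Y))"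
  unfolding red_join_def red_le_def recolor_def by auto

section \<open>Convergence to the final state\<close>

primrec pick_seq_pmf :: "nat \<Rightarrow> (nat \<times> nat) set \<Rightarrow> nat \<Rightarrow> (nat \<Rightarrow> nat) list pmf" where
  "pick_seq_pmf n E 0 = return_pmf []"
| "pick_seq_pmf n E (Suc t) = bind_pmf (pick_seq_pmf n E t) (\<lambda>ps. map_pmf (\<lambda>p. ps @ [p]) (pick_pmf n E))"

lemma step_pmf_eq_map_pick_step: "step_pmf n E S = map_pmf (\<lambda>p. pick_step n E p S) (pick_pmf n E)"
  unfolding step_pmf_def pick_step_def by simp

lemma run_pmf_Suc: "run_pmf n E (Suc t) S = bind_pmf (run_pmf n E t S) (step_pmf n E)"
  by (simp add: run_pmf_def)

lemma run_pmf_eq_map_pick_run: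
  "run_pmf n E t S = map_pmf (\<lambda>ps. pick_run n E ps S) (pick_seq_pmf n E t)"
proof (induction t)
  case 0
  then show ?case by (simp add: run_pmf_def)
next
  case (Suc t)
  then show ?case
    by (simp add: run_pmf_Suc bind_map_pmf map_bind_pmf map_pmf_comp step_pmf_eq_map_pick_step)
qed

definition extends_state :: "state \<Rightarrow> state \<Rightarrow> bool" where
  "extends_state a b \<longleftrightarrow> (\<forall>v. a v \<noteq> Unc \<longrightarrow> b v = a v)"

definition upward_closed :: "state set \<Rightarrow> bool" where
  "upward_closed U \<longleftrightarrow> (\<forall>x y. x \<in> U \<longrightarrow> extends_state x y \<longrightarrow> y \<in> U)"

lemma extends_state_trans: "extends_state a b \<Longrightarrow> extends_state b c \<Longrightarrow> extends_state a c"
  unfolding extends_state_def by metis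

lemma extends_state_antisym: "extends_state a b \<Longrightarrow> extends_state b a \<Longrightarrow> a = b"
  unfolding extends_state_def by (rule ext) metis

lemma extends_state_step: "y \<in> set_pmf (step_pmf n E x) \<Longrightarrow> extends_state x y"
  by (auto simp: step_pmf_eq_map_pick_step extends_state_def pick_step_def)

lemma prob_bind_ge_if_preserved:
  assumes "\<And>x y. x \<in> set_pmf M \<Longrightarrow> x \<in> U \<Longrightarrow> y \<in> set_pmf (f x) \<Longrightarrow> y \<in> U"
  shows "measure_pmf.prob M U \<le> measure_pmf.prob (bind_pmf M f) U"
proof -
  have "emeasure (measure_pmf M) U = (\<integral>\<^sup>+x. indicator U x \<partial>M)"
    by simp
  also have "\<dots> \<le> (\<integral>\<^sup>+x. emeasure (f x) U \<partial>M)"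
  proof (rule nn_integral_mono_AE, rule AE_pmfI)
    fix x assume x: "x \<in> set_pmf M"
    show "indicator U x \<le> emeasure (measure_pmf (f x)) U"
    proof (cases "x \<in> U")
      case True
      have "emeasure (measure_pmf (f x)) U = 1"
        using assms[OF x True] by (subst measure_pmf.emeasure_eq_1_AE) (auto intro!: AE_pmfI)
      then show ?thesis using True by simp
    qed simp
  qed
  also have "\<dots> = emeasure (bind_pmf M f) U" by simp
  finally show ?thesis
    by (simp add: measure_pmf.emeasure_eq_measure)
qed

lemma incseq_prob_run_pmf:
  assumes "upward_closed U"
  shows "incseq (\<lambda>t. measure_pmf.prob (run_pmf n E t S) U)"
proof (rule incseq_SucI)
  fix t
  show "measure_pmf.prob (run_pmf n E t S) U \<le> measure_pmf.prob (run_pmf n E (Suc t) S) U"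
    unfolding run_pmf_Suc
    by (rule prob_bind_ge_if_preserved) (use assms extends_state_step in \<open>auto simp: upward_closed_def\<close>)
qed

lemma convergent_prob_run_pmf:
  assumes "upward_closed U"
  shows "convergent (\<lambda>t. measure_pmf.prob (run_pmf n E t S) U)"
proof -
  have "\<forall>t. measure_pmf.prob (run_pmf n E t S) U \<le> 1"
    by simp
  from incseq_convergent[OF incseq_prob_run_pmf[OF assms] this] show ?thesis
    by (meson convergentI)
qed

text \<open>
  The states extending \<open>s\<close> and those extending it strictly are both upward closed, and
  \<open>s\<close> is the difference of the two sets.
\<close>
lemma convergent_pmf_run_pmf: "convergent (\<lambda>t. pmf (run_pmf n E t S) s)"
proof -
  define U where "U = {x. extends_state s x}"
  define V where "V = {x. extends_state s x \<and> x \<noteq> s}"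
  have "upward_closed U" "upward_closed V"
    unfolding upward_closed_def U_def V_def using extends_state_trans extends_state_antisym by blast+
  moreover have "pmf (run_pmf n E t S) s
      = measure_pmf.prob (run_pmf n E t S) U - measure_pmf.prob (run_pmf n E t S) V" for t
  proof -
    have "U = {s} \<union> V" "{s} \<inter> V = {}" unfolding U_def V_def by (auto simp: extends_state_def)
    then show ?thesis
      using measure_pmf.finite_measure_Union[of "{s}" "run_pmf n E t S" V]
      by (simp add: measure_pmf_single del: insert_is_Un)
  qed
  ultimately show ?thesis
    by (simp only:) (intro convergent_diff convergent_prob_run_pmf)
qed

definition fixed_outside :: "nat \<Rightarrow> state \<Rightarrow> state set" where
  "fixed_outside n S = {x. \<forall>v. \<not> v < n \<longrightarrow> x v = S v}"

lemma finite_fixed_outside: "finite (fixed_outside n S)"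
proof -
  have "fixed_outside n S \<subseteq> (\<lambda>f v. if v < n then f v else S v) ` (PiE {..<n} (\<lambda>_. UNIV))"
  proof
    fix x assume "x \<in> fixed_outside n S"
    then show "x \<in> (\<lambda>f v. if v < n then f v else S v) ` (PiE {..<n} (\<lambda>_. UNIV))"
      by (intro image_eqI[of _ _ "restrict x {..<n}"]) (auto simp: fixed_outside_def)
  qed
  moreover have "UNIV = {Blue, Red, Unc}"
    using color.exhaust by blast
  then have "finite (UNIV :: color set)"
    by (metis finite.emptyI finite.insertI)
  then have "finite (PiE {..<n} (\<lambda>_. UNIV :: color set))"
    by (intro finite_PiE) auto
  ultimately show ?thesis by (meson finite_surj)
qed

lemma set_pmf_run_pmf: "set_pmf (run_pmf n E t S) \<subseteq> fixed_outside n S"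
  by (auto simp: run_pmf_eq_map_pick_run fixed_outside_def pick_run_outside)

lemma pmf_run_pmf_outside: "s \<notin> fixed_outside n S \<Longrightarrow> pmf (run_pmf n E t S) s = 0"
  using set_pmf_run_pmf by (meson pmf_eq_0_set_pmf subsetD)

text \<open>
  \<open>embed_pmf\<close> returns the given weights only if they form a distribution; here they do
  because all run distributions live on the finite set \<open>fixed_outside n S\<close>.
\<close>
lemma pmf_final_pmf: "pmf (final_pmf n E S) s = lim (\<lambda>t. pmf (run_pmf n E t S) s)"
proof -
  define L where "L s = lim (\<lambda>t. pmf (run_pmf n E t S) s)" for s
  have L: "(\<lambda>t. pmf (run_pmf n E t S) s) \<longlonglongrightarrow> L s" for s
    unfolding L_def using convergent_pmf_run_pmf convergent_LIMSEQ_iff by blast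
  have L_nonneg: "0 \<le> L s" for s
    by (rule LIMSEQ_le_const[OF L]) simp
  have L_outside: "L s = 0" if "s \<notin> fixed_outside n S" for s
    using L[of s] by (simp add: pmf_run_pmf_outside[OF that] LIMSEQ_const_iff)
  have "(\<lambda>t. \<Sum>s\<in>fixed_outside n S. pmf (run_pmf n E t S) s) \<longlonglongrightarrow> (\<Sum>s\<in>fixed_outside n S. L s)"
    by (intro tendsto_sum L)
  moreover have "(\<Sum>s\<in>fixed_outside n S. pmf (run_pmf n E t S) s) = 1" for t
    by (rule sum_pmf_eq_1[OF finite_fixed_outside set_pmf_run_pmf])
  ultimately have L_sum: "(\<Sum>s\<in>fixed_outside n S. L s) = 1"
    by (simp add: LIMSEQ_const_iff)
  have "(\<integral>\<^sup>+x. ennreal (L x) \<partial>count_space UNIV) = (\<Sum>x\<in>fixed_outside n S. ennreal (L x))"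
    by (rule nn_integral_count_space') (auto simp: finite_fixed_outside L_outside)
  also have "\<dots> = 1"
    by (simp add: sum_ennreal L_nonneg L_sum)
  finally show ?thesis
    unfolding final_pmf_def L_def[symmetric] by (rule pmf_embed_pmf[OF L_nonneg])
qed

lemma run_pmf_tendsto_final_pmf: "(\<lambda>t. pmf (run_pmf n E t S) s) \<longlonglongrightarrow> pmf (final_pmf n E S) s"
  unfolding pmf_final_pmf using convergent_pmf_run_pmf convergent_LIMSEQ_iff by blast

lemma set_pmf_final_pmf: "set_pmf (final_pmf n E S) \<subseteq> fixed_outside n S"
proof
  fix s assume s: "s \<in> set_pmf (final_pmf n E S)"
  show "s \<in> fixed_outside n S"
  proof (rule ccontr)
    assume "s \<notin> fixed_outside n S"
    then have "pmf (final_pmf n E S) s = 0"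
      using run_pmf_tendsto_final_pmf[of n E S s] by (simp add: pmf_run_pmf_outside LIMSEQ_const_iff)
    then show False
      using s by (simp add: set_pmf_eq)
  qed
qed

lemma expectation_run_pmf_tendsto:
  fixes f :: "state \<Rightarrow> real"
  shows "(\<lambda>t. measure_pmf.expectation (run_pmf n E t S) f)
           \<longlonglongrightarrow> measure_pmf.expectation (final_pmf n E S) f"
proof -
  have "measure_pmf.expectation M f = (\<Sum>s\<in>fixed_outside n S. f s * pmf M s)"
    if "set_pmf M \<subseteq> fixed_outside n S" for M
    by (rule integral_measure_pmf_real) (use that finite_fixed_outside in auto)
  then show ?thesis
    using set_pmf_run_pmf set_pmf_final_pmf
    by (simp only:) (intro tendsto_sum tendsto_mult tendsto_const run_pmf_tendsto_final_pmf)
qed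

section \<open>Monotonicity and submodularity of the influence function\<close>

definition red_set :: "nat \<Rightarrow> state \<Rightarrow> nat set" where
  "red_set n s = {v \<in> {..<n}. s v = Red}"

lemma finite_red_set [simp]: "finite (red_set n s)"
  by (simp add: red_set_def)

lemma red_count_eq_card: "red_count n s = real (card (red_set n s))"
  by (simp add: red_count_def red_set_def)

lemma red_count_nonneg: "0 \<le> red_count n s"
  by (simp add: red_count_def)

lemma red_count_le: "red_count n s \<le> real n"
proof -
  have "card (red_set n s) \<le> card {..<n}"
    by (rule card_mono) (auto simp: red_set_def)
  then show ?thesis by (simp add: red_count_eq_card)
qed

lemma integrable_measure_pmf_bounded:
  fixes f :: "'a \<Rightarrow> real"
  shows "(\<And>x. \<bar>f x\<bar> \<le> B) \<Longrightarrow> integrable (measure_pmf M) f"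
  by (rule measure_pmf.integrable_const_bound[where B=B]) auto

lemma integrable_red_count_pick_run:
  "integrable (measure_pmf M) (\<lambda>ps. red_count n (pick_run n E ps S'))"
  by (rule integrable_measure_pmf_bounded[where B="real n"])
    (use red_count_nonneg red_count_le in \<open>simp add: abs_le_iff\<close>)

definition F_at :: "nat \<Rightarrow> (nat \<times> nat) set \<Rightarrow> state \<Rightarrow> nat \<Rightarrow> nat set \<Rightarrow> real" where
  "F_at n E S t A =
     measure_pmf.expectation (pick_seq_pmf n E t) (\<lambda>ps. red_count n (pick_run n E ps (recolor S A)))"

lemma F_at_tendsto_F: "(\<lambda>t. F_at n E S t A) \<longlonglongrightarrow> F n E S A"
  using expectation_run_pmf_tendsto[of n E "recolor S A" "red_count n"]
  unfolding F_def F_at_def run_pmf_eq_map_pick_run by simp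

lemma mono_F: "mono (F n E S)"
proof (rule monoI)
  fix X Y :: "nat set" assume "X \<subseteq> Y"
  have "red_count n (pick_run n E ps (recolor S X)) \<le> red_count n (pick_run n E ps (recolor S Y))" for ps
  proof -
    have "red_le (pick_run n E ps (recolor S X)) (pick_run n E ps (recolor S Y))"
      by (rule red_le_pick_run[OF red_le_recolor[OF \<open>X \<subseteq> Y\<close>]])
    then have "red_set n (pick_run n E ps (recolor S X)) \<subseteq> red_set n (pick_run n E ps (recolor S Y))"
      by (auto simp: red_le_def red_set_def)
    then show ?thesis
      by (simp add: red_count_eq_card card_mono)
  qed
  then have "F_at n E S t X \<le> F_at n E S t Y" for t
    unfolding F_at_def by (intro integral_mono integrable_red_count_pick_run)
  then show "F n E S X \<le> F n E S Y"
    using LIMSEQ_le[OF F_at_tendsto_F F_at_tendsto_F] by blast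
qed

lemma red_count_pick_run_submodular:
  "red_count n (pick_run n E ps (recolor S (X \<union> Y))) + red_count n (pick_run n E ps (recolor S (X \<inter> Y)))
   \<le> red_count n (pick_run n E ps (recolor S X)) + red_count n (pick_run n E ps (recolor S Y))"
proof -
  define reds where "reds A = red_set n (pick_run n E ps (recolor S A))" for A
  have "red_join (pick_run n E ps (recolor S X)) (pick_run n E ps (recolor S Y))
      (pick_run n E ps (recolor S (X \<union> Y)))"
    by (rule red_join_pick_run[OF red_join_recolor])
  then have Un: "reds (X \<union> Y) \<subseteq> reds X \<union> reds Y"
    unfolding red_join_def reds_def red_set_def by blast
  have "red_le (pick_run n E ps (recolor S (X \<inter> Y))) (pick_run n E ps (recolor S X))"
    "red_le (pick_run n E ps (recolor S (X \<inter> Y))) (pick_run n E ps (recolor S Y))"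
    by (auto intro!: red_le_pick_run red_le_recolor)
  then have Int: "reds (X \<inter> Y) \<subseteq> reds X \<inter> reds Y"
    unfolding red_le_def reds_def red_set_def by blast
  have "card (reds (X \<union> Y)) + card (reds (X \<inter> Y)) \<le> card (reds X \<union> reds Y) + card (reds X \<inter> reds Y)"
    using card_mono[OF _ Un] card_mono[OF _ Int] by (simp add: reds_def add_mono)
  also have "\<dots> = card (reds X) + card (reds Y)"
    by (simp add: reds_def card_Un_Int[symmetric])
  finally show ?thesis
    unfolding red_count_eq_card reds_def by linarith
qed

definition submodular :: "('a set \<Rightarrow> real) \<Rightarrow> bool" where
  "submodular f \<longleftrightarrow> (\<forall>X Y. f (X \<union> Y) + f (X \<inter> Y) \<le> f X + f Y)"

lemma submodular_F: "submodular (F n E S)"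
  unfolding submodular_def
proof (intro allI)
  fix X Y
  let ?f = "\<lambda>A ps. red_count n (pick_run n E ps (recolor S A))"
  have "F_at n E S t (X \<union> Y) + F_at n E S t (X \<inter> Y) \<le> F_at n E S t X + F_at n E S t Y" for t
  proof -
    have "F_at n E S t (X \<union> Y) + F_at n E S t (X \<inter> Y)
        = measure_pmf.expectation (pick_seq_pmf n E t) (\<lambda>ps. ?f (X \<union> Y) ps + ?f (X \<inter> Y) ps)"
      unfolding F_at_def by (simp add: integrable_red_count_pick_run)
    also have "\<dots> \<le> measure_pmf.expectation (pick_seq_pmf n E t) (\<lambda>ps. ?f X ps + ?f Y ps)"
      by (intro integral_mono Bochner_Integration.integrable_add integrable_red_count_pick_run
          red_count_pick_run_submodular)
    also have "\<dots> = F_at n E S t X + F_at n E S t Y"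
      unfolding F_at_def by (simp add: integrable_red_count_pick_run)
    finally show ?thesis .
  qed
  then show "F n E S (X \<union> Y) + F n E S (X \<inter> Y) \<le> F n E S X + F n E S Y"
    using LIMSEQ_le[OF tendsto_add[OF F_at_tendsto_F F_at_tendsto_F]
        tendsto_add[OF F_at_tendsto_F F_at_tendsto_F]] by blast
qed

lemma card_le_F: "A \<subseteq> {..<n} \<Longrightarrow> real (card A) \<le> F n E S A"
proof -
  assume A: "A \<subseteq> {..<n}"
  have "real (card A) \<le> red_count n (pick_run n E ps (recolor S A))" for ps
  proof -
    have "A \<subseteq> red_set n (pick_run n E ps (recolor S A))"
      using A by (auto simp: red_set_def pick_run_Red recolor_def)
    then show ?thesis
      by (simp add: red_count_eq_card card_mono)
  qed
  then have "real (card A) \<le> F_at n E S t A" for t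
    unfolding F_at_def
    by (intro measure_pmf.integral_ge_const integrable_red_count_pick_run AE_pmfI)
  then show ?thesis
    using LIMSEQ_le_const[OF F_at_tendsto_F] by blast
qed

lemma F_nonneg: "0 \<le> F n E S A"
  unfolding F_def by (rule Bochner_Integration.integral_nonneg) (simp add: red_count_nonneg)

section \<open>A multiplicative Chernoff bound\<close>

lemma exp_le_one_plus_x_plus_square:
  fixes y :: real
  assumes "\<bar>y\<bar> \<le> 1"
  shows "exp y \<le> 1 + y + y\<^sup>2"
proof (cases "0 \<le> y")
  case True
  then show ?thesis using exp_bound assms by auto
next
  case False
  define z where "z = - y"
  have z: "0 \<le> z" "z \<le> 1" using False assms by (auto simp: z_def)
  have "exp y = inverse (exp z)" by (simp add: z_def exp_minus)
  also have "\<dots> \<le> inverse (1 + z)"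
    using z by (intro le_imp_inverse_le exp_ge_add_one_self) auto
  also have "\<dots> \<le> 1 - z + z\<^sup>2"
  proof -
    have "1 \<le> (1 + z) * (1 - z + z\<^sup>2)"
      using z by (simp add: algebra_simps power2_eq_square power3_eq_cube)
    then show ?thesis using z by (simp add: field_simps)
  qed
  finally show ?thesis by (simp add: z_def)
qed

lemma integrable_exp_scaled:
  fixes X :: "'a \<Rightarrow> real"
  assumes "\<And>x. 0 \<le> X x" "\<And>x. X x \<le> m"
  shows "integrable (measure_pmf P) (\<lambda>x. exp (c * X x))"
proof (rule integrable_measure_pmf_bounded[where B="exp (\<bar>c\<bar> * m)"])
  fix x
  have "c * X x \<le> \<bar>c\<bar> * m"
    using assms[of x] by (metis abs_ge_self abs_mult abs_of_nonneg mult_mono' abs_ge_zero order_trans)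
  then show "\<bar>exp (c * X x)\<bar> \<le> exp (\<bar>c\<bar> * m)" by simp
qed

lemma expectation_exp_le:
  fixes P :: "'a pmf" and X :: "'a \<Rightarrow> real"
  assumes X: "\<And>x. 0 \<le> X x" "\<And>x. X x \<le> m" and c: "\<bar>c\<bar> * m \<le> 1"
  defines "\<mu> \<equiv> measure_pmf.expectation P X"
  shows "measure_pmf.expectation P (\<lambda>x. exp (c * X x)) \<le> exp (c * \<mu> + c\<^sup>2 * m * \<mu>)"
proof -
  have m: "0 \<le> m" using X order_trans by blast
  have iX: "integrable (measure_pmf P) X"
    by (rule integrable_measure_pmf_bounded[where B=m]) (use X in auto)
  have "exp (c * X x) \<le> 1 + c * X x + c\<^sup>2 * m * X x" for x
  proof -
    have "\<bar>c * X x\<bar> \<le> 1"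
      using X[of x] c m by (simp add: abs_mult) (metis abs_ge_zero mult_left_mono order_trans)
    then have "exp (c * X x) \<le> 1 + c * X x + (c * X x)\<^sup>2"
      by (rule exp_le_one_plus_x_plus_square)
    also have "(c * X x)\<^sup>2 = c\<^sup>2 * (X x * X x)" by (simp add: power2_eq_square)
    also have "\<dots> \<le> c\<^sup>2 * (m * X x)"
      by (intro mult_left_mono mult_right_mono) (use X[of x] in auto)
    finally show ?thesis by (simp add: mult.assoc)
  qed
  then have "measure_pmf.expectation P (\<lambda>x. exp (c * X x))
      \<le> measure_pmf.expectation P (\<lambda>x. 1 + c * X x + c\<^sup>2 * m * X x)"
    using iX by (intro integral_mono integrable_exp_scaled[OF X]) auto
  also have "\<dots> = 1 + (c * \<mu> + c\<^sup>2 * m * \<mu>)"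
    using iX by (simp add: \<mu>_def)
  also have "\<dots> \<le> exp (c * \<mu> + c\<^sup>2 * m * \<mu>)"
    by (rule exp_ge_add_one_self)
  finally show ?thesis .
qed

lemma prob_Pi_pmf_sum_tail:
  fixes P :: "'a pmf" and X :: "'a \<Rightarrow> real"
  assumes X: "\<And>x. 0 \<le> X x" "\<And>x. X x \<le> m" and c: "\<bar>c\<bar> * m \<le> 1"
  defines "\<mu> \<equiv> measure_pmf.expectation P X"
  shows "measure_pmf.prob (Pi_pmf {..<R} d (\<lambda>_. P)) {xs. c * a \<le> c * (\<Sum>i<R. X (xs i))}
     \<le> exp (real R * (c * \<mu> + c\<^sup>2 * m * \<mu>) - c * a)"
proof -
  let ?Q = "Pi_pmf {..<R} d (\<lambda>_. P)"
  let ?u = "\<lambda>xs. \<Prod>i<R. exp (c * X (xs i))"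
  have u_eq: "exp (c * (\<Sum>i<R. X (xs i))) = ?u xs" for xs
    by (simp add: sum_distrib_left exp_sum)
  have "measure_pmf.expectation ?Q ?u = (\<Prod>i<R. measure_pmf.expectation P (\<lambda>x. exp (c * X x)))"
    by (rule expectation_prod_Pi_pmf) (auto intro: integrable_exp_scaled[OF X])
  also have "\<dots> \<le> (\<Prod>i<R. exp (c * \<mu> + c\<^sup>2 * m * \<mu>))"
    by (rule prod_mono)
      (use expectation_exp_le[OF X c] in \<open>auto simp: \<mu>_def intro: Bochner_Integration.integral_nonneg\<close>)
  also have "\<dots> = exp (real R * (c * \<mu> + c\<^sup>2 * m * \<mu>))"
    by (simp add: exp_of_nat_mult[symmetric])
  finally have Eu: "measure_pmf.expectation ?Q ?u \<le> exp (real R * (c * \<mu> + c\<^sup>2 * m * \<mu>))" .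
  have "measure_pmf.prob ?Q {xs. c * a \<le> c * (\<Sum>i<R. X (xs i))}
      = measure_pmf.prob ?Q {xs \<in> space (measure_pmf ?Q). exp (c * a) \<le> ?u xs}"
    by (simp add: u_eq[symmetric])
  also have "\<dots> \<le> measure_pmf.expectation ?Q ?u / exp (c * a)"
    by (intro integral_Markov_inequality_measure[where A=UNIV] integrable_prod_Pi_pmf
        integrable_exp_scaled[OF X]) (auto intro!: AE_pmfI prod_nonneg)
  also have "\<dots> \<le> exp (real R * (c * \<mu> + c\<^sup>2 * m * \<mu>)) / exp (c * a)"
    by (intro divide_right_mono Eu) auto
  also have "\<dots> = exp (real R * (c * \<mu> + c\<^sup>2 * m * \<mu>) - c * a)"
    by (simp add: exp_diff)
  finally show ?thesis .
qed

lemma prob_mean_relative_deviation: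
  fixes P :: "'a pmf" and X :: "'a \<Rightarrow> real"
  assumes X: "\<And>x. 0 \<le> X x" "\<And>x. X x \<le> m" and m: "0 < m" and \<delta>: "0 < \<delta>" "\<delta> \<le> 1"
    and R: "0 < R"
  defines "\<mu> \<equiv> measure_pmf.expectation P X"
  shows "measure_pmf.prob (map_pmf (\<lambda>xs. (\<Sum>i<R. X (xs i)) / real R) (Pi_pmf {..<R} d (\<lambda>_. P)))
           {e. \<delta> * \<mu> < \<bar>e - \<mu>\<bar>} \<le> 2 * exp (- (real R * \<mu> * \<delta>\<^sup>2 / (4 * m)))"
proof -
  let ?Q = "Pi_pmf {..<R} d (\<lambda>_. P)"
  let ?Z = "\<lambda>xs. \<Sum>i<R. X (xs i)"
  let ?bound = "exp (- (real R * \<mu> * \<delta>\<^sup>2 / (4 * m)))"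
  define c where "c = \<delta> / (2 * m)"
  have c: "\<bar>c\<bar> * m \<le> 1" "\<bar>-c\<bar> * m \<le> 1" "0 < c"
    using m \<delta> by (auto simp: c_def)
  define Up where "Up = {xs. c * (real R * (1 + \<delta>) * \<mu>) \<le> c * ?Z xs}"
  define Lo where "Lo = {xs. (-c) * (real R * (1 - \<delta>) * \<mu>) \<le> (-c) * ?Z xs}"
  have "(\<lambda>xs. ?Z xs / real R) -` {e. \<delta> * \<mu> < \<bar>e - \<mu>\<bar>} \<subseteq> Up \<union> Lo"
  proof
    fix xs assume "xs \<in> (\<lambda>xs. ?Z xs / real R) -` {e. \<delta> * \<mu> < \<bar>e - \<mu>\<bar>}"
    then have "real R * (1 + \<delta>) * \<mu> < ?Z xs \<or> ?Z xs < real R * (1 - \<delta>) * \<mu>"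
      using R by (auto simp: abs_if field_simps split: if_splits)
    then show "xs \<in> Up \<union> Lo"
      using c by (auto simp: Up_def Lo_def)
  qed
  then have "measure_pmf.prob (map_pmf (\<lambda>xs. ?Z xs / real R) ?Q) {e. \<delta> * \<mu> < \<bar>e - \<mu>\<bar>}
      \<le> measure_pmf.prob ?Q (Up \<union> Lo)"
    by (simp add: measure_pmf.finite_measure_mono)
  also have "\<dots> \<le> measure_pmf.prob ?Q Up + measure_pmf.prob ?Q Lo"
    by (rule measure_Un_le) auto
  also have "\<dots> \<le> ?bound + ?bound"
  proof (rule add_mono)
    have "real R * (c * \<mu> + c\<^sup>2 * m * \<mu>) - c * (real R * (1 + \<delta>) * \<mu>)
        = - (real R * \<mu> * \<delta>\<^sup>2 / (4 * m))"
      using m by (simp add: c_def field_simps power2_eq_square)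
    then show "measure_pmf.prob ?Q Up \<le> ?bound"
      using prob_Pi_pmf_sum_tail[where X=X and m=m and P=P and R=R and d=d
          and a="real R * (1 + \<delta>) * \<mu>", OF X c(1)]
      by (simp add: Up_def \<mu>_def)
    have "real R * ((-c) * \<mu> + (-c)\<^sup>2 * m * \<mu>) - (-c) * (real R * (1 - \<delta>) * \<mu>)
        = - (real R * \<mu> * \<delta>\<^sup>2 / (4 * m))"
      using m by (simp add: c_def field_simps power2_eq_square)
    then show "measure_pmf.prob ?Q Lo \<le> ?bound"
      using prob_Pi_pmf_sum_tail[where X=X and m=m and P=P and R=R and d=d
          and a="real R * (1 - \<delta>) * \<mu>", OF X c(2)]
      by (simp add: Lo_def \<mu>_def)
  qed
  finally show ?thesis by simp
qed

text \<open>Since \<open>F\<^sub>S(B) \<ge> |B| \<ge> 1\<close>, the relative accuracy of the estimate does not depend on \<open>B\<close>.\<close>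
lemma prob_est_pmf_inaccurate:
  assumes n: "0 < n" and R: "0 < R" and B: "B \<subseteq> {..<n}" "B \<noteq> {}" and \<delta>: "0 < \<delta>" "\<delta> \<le> 1"
  shows "measure_pmf.prob (est_pmf n E S R B) {e. \<delta> * F n E S B < \<bar>e - F n E S B\<bar>}
     \<le> 2 * exp (- (real R * \<delta>\<^sup>2 / (4 * real n)))"
proof -
  have "measure_pmf.prob (est_pmf n E S R B) {e. \<delta> * F n E S B < \<bar>e - F n E S B\<bar>}
     \<le> 2 * exp (- (real R * F n E S B * \<delta>\<^sup>2 / (4 * real n)))"
    unfolding est_pmf_def F_def
    by (rule prob_mean_relative_deviation)
      (use n R \<delta> in \<open>auto simp: red_count_nonneg red_count_le\<close>)
  also have "\<dots> \<le> 2 * exp (- (real R * \<delta>\<^sup>2 / (4 * real n)))"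
  proof -
    have "finite B" using B finite_subset by blast
    then have "1 \<le> card B" using B(2) by (simp add: Suc_leI card_gt_0_iff)
    then have "1 \<le> F n E S B"
      using card_le_F[OF B(1), of E S] by linarith
    then have "real R * \<delta>\<^sup>2 \<le> real R * F n E S B * \<delta>\<^sup>2"
      by (intro mult_right_mono) (auto simp: mult_le_cancel_left1)
    then show ?thesis
      using n by (simp add: divide_right_mono)
  qed
  finally show ?thesis .
qed

section \<open>One step of the greedy algorithm\<close>

lemma submodular_marginal_sum:
  assumes f: "submodular f" "mono f" and "finite T"
  shows "f (A \<union> T) - f A \<le> (\<Sum>u\<in>T. f (insert u A) - f A)"
  using \<open>finite T\<close>
proof (induction T rule: finite_induct)
  case empty
  then show ?case by simp
next
  case (insert u T)
  have "f ((A \<union> T) \<union> insert u A) + f ((A \<union> T) \<inter> insert u A) \<le> f (A \<union> T) + f (insert u A)"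
    using f(1) unfolding submodular_def by blast
  moreover have "f A \<le> f ((A \<union> T) \<inter> insert u A)"
    using f(2) by (rule monoD) auto
  moreover have "(A \<union> T) \<union> insert u A = A \<union> insert u T"
    by auto
  ultimately show ?case
    using insert by simp
qed

lemma submodular_best_gain:
  assumes f: "submodular f" "mono f" and T: "finite T" "card T \<le> k" "T \<subseteq> D"
    and best: "\<And>w. w \<in> D \<Longrightarrow> f (insert w A) \<le> f (insert b A)"
  shows "f (A \<union> T) - f A \<le> real k * (f (insert b A) - f A)"
proof -
  have "f (A \<union> T) - f A \<le> (\<Sum>u\<in>T. f (insert u A) - f A)"
    by (rule submodular_marginal_sum[OF f T(1)])
  also have "\<dots> \<le> (\<Sum>u\<in>T. f (insert b A) - f A)"
    using T(3) by (intro sum_mono) (auto dest: best)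
  also have "\<dots> = real (card T) * (f (insert b A) - f A)"
    by simp
  also have "\<dots> \<le> real k * (f (insert b A) - f A)"
    using T(2) f(2) by (intro mult_right_mono) (auto dest: monoD[of f A "insert b A"])
  finally show ?thesis .
qed

lemma maximizer_of_estimates_nearly_maximal:
  fixes g e :: "'a \<Rightarrow> real"
  assumes "v \<in> D" "w \<in> D" "e w \<le> e v" "0 \<le> \<delta>"
    and accurate: "\<And>u. u \<in> D \<Longrightarrow> \<bar>e u - g u\<bar> \<le> \<delta> * g u"
    and bounded: "\<And>u. u \<in> D \<Longrightarrow> g u \<le> M"
  shows "g w - 2 * \<delta> * M \<le> g v"
proof -
  have "(1 - \<delta>) * g w \<le> e w" "e v \<le> (1 + \<delta>) * g v"
    using accurate[of w] accurate[of v] assms(1,2) by (auto simp: abs_le_iff algebra_simps)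
  then have "g w - g v \<le> \<delta> * (g v + g w)"
    using \<open>e w \<le> e v\<close> by (simp add: algebra_simps)
  also have "\<dots> \<le> \<delta> * (M + M)"
    using assms(1,2,4) bounded by (intro mult_left_mono add_mono) auto
  finally show ?thesis by simp
qed

definition admissible :: "nat \<Rightarrow> state \<Rightarrow> nat \<Rightarrow> nat set \<Rightarrow> bool" where
  "admissible n S k X \<longleftrightarrow> X \<subseteq> {..<n} \<and> card X \<le> k \<and> X \<inter> blue_set n S = {}"

lemma OPT_eq_Max: "OPT n E S k = Max (F n E S ` {X. admissible n S k X})"
  unfolding OPT_def admissible_def by (simp add: setcompr_eq_image)

lemma finite_admissible: "finite {X. admissible n S k X}"
  by (rule finite_subset[of _ "Pow {..<n}"]) (auto simp: admissible_def)

lemma F_le_OPT: "admissible n S k X \<Longrightarrow> F n E S X \<le> OPT n E S k"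
  unfolding OPT_eq_Max by (rule Max_ge) (auto intro: finite_admissible)

lemma OPT_attained: "\<exists>X. admissible n S k X \<and> F n E S X = OPT n E S k"
proof -
  have "admissible n S k {}" by (simp add: admissible_def)
  then have "OPT n E S k \<in> F n E S ` {X. admissible n S k X}"
    unfolding OPT_eq_Max by (intro Max_in) (auto intro: finite_admissible)
  then show ?thesis by auto
qed

lemma OPT_nonneg: "0 \<le> OPT n E S k"
  using F_le_OPT[of n S k "{}" E] F_nonneg[of n E S "{}"] by (simp add: admissible_def)

lemma greedy_gap_step:
  fixes n :: nat and S :: state and \<delta> :: real and e :: "nat \<Rightarrow> real"
  defines "C \<equiv> {..<n} - blue_set n S"
  assumes k: "1 \<le> k" and A: "A \<subseteq> C" "card A < k" and v: "v \<in> C - A" and \<delta>: "0 \<le> \<delta>"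
    and accurate: "\<And>w. w \<in> C - A \<Longrightarrow> \<bar>e w - F n E S (insert w A)\<bar> \<le> \<delta> * F n E S (insert w A)"
    and maximal: "\<And>w. w \<in> C - A \<Longrightarrow> e w \<le> e v"
  shows "OPT n E S k - F n E S (insert v A)
    \<le> (1 - 1 / real k) * (OPT n E S k - F n E S A) + 2 * \<delta> * OPT n E S k"
proof -
  let ?F = "F n E S" and ?O = "OPT n E S k" and ?D = "C - A"
  have fin: "finite C" "finite A"
    using A(1) by (auto simp: C_def intro: finite_subset)
  have le_OPT: "?F (insert w A) \<le> ?O" if "w \<in> ?D" for w
  proof (rule F_le_OPT)
    show "admissible n S k (insert w A)"
      using that A fin(2) by (auto simp: admissible_def C_def blue_set_def)
  qed
  \<comment> \<open>\<open>b\<close> is the exact greedy choice; \<open>v\<close>, chosen by the estimates, is almost as good.\<close>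
  obtain b where b: "b \<in> ?D" "Max ((\<lambda>w. ?F (insert w A)) ` ?D) = ?F (insert b A)"
    using obtains_MAX[of ?D] fin v by blast
  have best: "?F (insert w A) \<le> ?F (insert b A)" if "w \<in> ?D" for w
    unfolding b(2)[symmetric] using fin that by (intro Max_ge) auto
  obtain X where X: "admissible n S k X" "?F X = ?O"
    using OPT_attained by blast
  have "?O - ?F A \<le> ?F (A \<union> (X - A)) - ?F A"
    using mono_F[of n E S] X(2) by (auto dest: monoD[of _ X "A \<union> (X - A)"])
  also have "\<dots> \<le> real k * (?F (insert b A) - ?F A)"
  proof (rule submodular_best_gain[OF submodular_F mono_F _ _ _ best])
    have "finite X"
      using X(1) by (auto simp: admissible_def intro: finite_subset)
    then show "finite (X - A)" "card (X - A) \<le> k" "X - A \<subseteq> ?D"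
      using X(1) card_Diff_subset[of "X \<inter> A" X]
      by (auto simp: admissible_def C_def blue_set_def Diff_Int)
  qed
  finally have "(?O - ?F A) / real k \<le> ?F (insert b A) - ?F A"
    using k by (simp add: field_simps)
  moreover have "?F (insert b A) - 2 * \<delta> * ?O \<le> ?F (insert v A)"
    by (rule maximizer_of_estimates_nearly_maximal[of v ?D b e])
      (use v b \<delta> accurate maximal le_OPT in auto)
  ultimately show ?thesis
    by (simp add: algebra_simps diff_divide_distrib)
qed

section \<open>The Monte Carlo greedy algorithm\<close>

lemma prob_bind_lower_bound:
  assumes q: "0 \<le> q"
    and h: "\<And>x. x \<in> set_pmf M \<Longrightarrow> x \<in> V \<Longrightarrow> 1 - q \<le> measure_pmf.prob (f x) U"
  shows "measure_pmf.prob M V - q \<le> measure_pmf.prob (bind_pmf M f) U"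
proof -
  have "emeasure (measure_pmf (bind_pmf M f)) (-U) = (\<integral>\<^sup>+x. emeasure (f x) (-U) \<partial>M)"
    by simp
  also have "\<dots> \<le> (\<integral>\<^sup>+x. ennreal (indicator (-V) x + q) \<partial>M)"
  proof (rule nn_integral_mono_AE, rule AE_pmfI)
    fix x assume x: "x \<in> set_pmf M"
    have "measure_pmf.prob (f x) (-U) = 1 - measure_pmf.prob (f x) U"
      using measure_pmf.prob_compl[of U "f x"] by (simp add: Compl_eq_Diff_UNIV)
    then have "measure_pmf.prob (f x) (-U) \<le> indicator (-V) x + q"
      using h[OF x] q by (cases "x \<in> V") (auto intro: order.trans[of _ 0])
    then show "emeasure (measure_pmf (f x)) (-U) \<le> ennreal (indicator (-V) x + q)"
      by (simp add: measure_pmf.emeasure_eq_measure ennreal_leI)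
  qed
  also have "\<dots> = ennreal (measure_pmf.prob M (-V) + q)"
  proof -
    have int: "integrable (measure_pmf M) (\<lambda>x. indicator (-V) x :: real)"
      by (rule integrable_measure_pmf_bounded[where B=1]) (simp split: split_indicator)
    have "(\<integral>\<^sup>+x. ennreal (indicator (-V) x + q) \<partial>M) = ennreal (\<integral>x. indicator (-V) x + q \<partial>M)"
      using int q by (intro nn_integral_eq_integral) (auto split: split_indicator)
    then show ?thesis
      using int by simp
  qed
  finally have "ennreal (measure_pmf.prob (bind_pmf M f) (-U)) \<le> ennreal (measure_pmf.prob M (-V) + q)"
    by (simp only: measure_pmf.emeasure_eq_measure)
  then have "measure_pmf.prob (bind_pmf M f) (-U) \<le> measure_pmf.prob M (-V) + q"
    using q by (subst (asm) ennreal_le_iff) auto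
  moreover have "measure_pmf.prob (bind_pmf M f) (-U) = 1 - measure_pmf.prob (bind_pmf M f) U"
    "measure_pmf.prob M (-V) = 1 - measure_pmf.prob M V"
    using measure_pmf.prob_compl[of U "bind_pmf M f"] measure_pmf.prob_compl[of V M]
    by (simp_all add: Compl_eq_Diff_UNIV)
  ultimately show ?thesis
    by linarith
qed

lemma prob_estimates_accurate:
  assumes n: "0 < n" and R: "0 < R" and A: "A \<subseteq> {..<n}" and D: "D \<subseteq> {..<n}"
    and \<delta>: "0 < \<delta>" "\<delta> \<le> 1" and p: "2 * exp (- (real R * \<delta>\<^sup>2 / (4 * real n))) \<le> p"
  shows "1 - real n * p \<le> measure_pmf.prob (Pi_pmf D 0 (\<lambda>v. est_pmf n E S R (A \<union> {v})))
    {e. \<forall>v\<in>D. \<bar>e v - F n E S (A \<union> {v})\<bar> \<le> \<delta> * F n E S (A \<union> {v})}"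
proof -
  define Q where "Q = Pi_pmf D 0 (\<lambda>v. est_pmf n E S R (A \<union> {v}))"
  define Bad where "Bad v = {e. \<delta> * F n E S (A \<union> {v}) < \<bar>e v - F n E S (A \<union> {v})\<bar>}" for v
  have D_fin: "finite D" "card D \<le> n"
    using D finite_subset card_mono[OF _ D] by auto
  have bad: "measure_pmf.prob Q (Bad v) \<le> p" if "v \<in> D" for v
  proof -
    have "measure_pmf.prob Q (Bad v) = measure_pmf.prob (map_pmf (\<lambda>e. e v) Q)
        {x. \<delta> * F n E S (A \<union> {v}) < \<bar>x - F n E S (A \<union> {v})\<bar>}"
      by (simp add: Bad_def vimage_def)
    also have "map_pmf (\<lambda>e. e v) Q = est_pmf n E S R (A \<union> {v})"
      unfolding Q_def using Pi_pmf_component[OF D_fin(1), of v 0] that by simp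
    also have "measure_pmf.prob (est_pmf n E S R (A \<union> {v}))
        {x. \<delta> * F n E S (A \<union> {v}) < \<bar>x - F n E S (A \<union> {v})\<bar>} \<le> p"
      by (rule order_trans[OF prob_est_pmf_inaccurate[OF n R _ _ \<delta>] p]) (use A D that in auto)
    finally show ?thesis .
  qed
  have "0 \<le> p"
    by (rule order_trans[OF _ p]) simp
  have "measure_pmf.prob Q (\<Union>v\<in>D. Bad v) \<le> (\<Sum>v\<in>D. measure_pmf.prob Q (Bad v))"
    by (rule measure_UNION_le[OF D_fin(1)]) auto
  also have "\<dots> \<le> real (card D) * p"
    using sum_mono[of D _ "\<lambda>_. p", OF bad] by simp
  also have "\<dots> \<le> real n * p"
    using D_fin(2) \<open>0 \<le> p\<close> by (intro mult_right_mono) auto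
  finally have "measure_pmf.prob Q (\<Union>v\<in>D. Bad v) \<le> real n * p" .
  moreover have "{e. \<forall>v\<in>D. \<bar>e v - F n E S (A \<union> {v})\<bar> \<le> \<delta> * F n E S (A \<union> {v})}
      = space (measure_pmf Q) - (\<Union>v\<in>D. Bad v)"
    by (auto simp: Bad_def not_less)
  moreover have "measure_pmf.prob Q (space (measure_pmf Q) - (\<Union>v\<in>D. Bad v))
      = 1 - measure_pmf.prob Q (\<Union>v\<in>D. Bad v)"
    by (rule measure_pmf.prob_compl) simp
  ultimately show ?thesis
    unfolding Q_def[symmetric] by simp
qed

definition greedy_invariant ::
    "nat \<Rightarrow> (nat \<times> nat) set \<Rightarrow> state \<Rightarrow> nat \<Rightarrow> real \<Rightarrow> nat \<Rightarrow> nat set \<Rightarrow> bool" where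
  "greedy_invariant n E S k \<delta> i A \<longleftrightarrow> A \<subseteq> {..<n} - blue_set n S \<and> card A = i \<and>
     OPT n E S k - F n E S A \<le> ((1 - 1 / real k) ^ i + 2 * \<delta> * real i) * OPT n E S k"

lemma gap_recurrence_step:
  fixes a x y opt \<delta> :: real
  assumes a: "0 \<le> a" "a \<le> 1" and "0 \<le> opt" "0 \<le> \<delta>"
    and x: "x \<le> (a ^ i + 2 * \<delta> * real i) * opt"
    and y: "y \<le> a * x + 2 * \<delta> * opt"
  shows "y \<le> (a ^ Suc i + 2 * \<delta> * real (Suc i)) * opt"
proof -
  have "a * x \<le> a * ((a ^ i + 2 * \<delta> * real i) * opt)"
    using x a by (intro mult_left_mono) auto
  also have "\<dots> = a ^ Suc i * opt + a * (2 * \<delta> * real i * opt)"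
    by (simp add: algebra_simps)
  also have "\<dots> \<le> a ^ Suc i * opt + 2 * \<delta> * real i * opt"
    using assms by (simp add: mult_left_le_one_le)
  finally show ?thesis
    using y by (simp add: algebra_simps)
qed

lemma greedy_invariant_Suc:
  fixes n :: nat and S :: state and \<delta> :: real and e :: "nat \<Rightarrow> real"
  defines "C \<equiv> {..<n} - blue_set n S"
  assumes k: "1 \<le> k" "k \<le> card C" and tb: "valid_tiebreak C tb" and "0 \<le> \<delta>"
    and inv: "greedy_invariant n E S k \<delta> i A" and "i < k"
    and accurate: "\<forall>v\<in>C - A. \<bar>e v - F n E S (A \<union> {v})\<bar> \<le> \<delta> * F n E S (A \<union> {v})"
  shows "greedy_invariant n E S k \<delta> (Suc i) (A \<union> {tb A e})"
proof -
  have A: "A \<subseteq> C" "card A = i" "finite A"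
    and gap: "OPT n E S k - F n E S A \<le> ((1 - 1 / real k) ^ i + 2 * \<delta> * real i) * OPT n E S k"
    using inv by (auto simp: greedy_invariant_def C_def intro: finite_subset)
  have "C - A \<noteq> {}"
  proof
    assume "C - A = {}"
    then have "card C \<le> card A"
      using A(3) by (intro card_mono) auto
    then show False
      using k(2) \<open>i < k\<close> A(2) by simp
  qed
  define v where "v = tb A e"
  have v: "v \<in> C - A" and maximal: "\<And>w. w \<in> C - A \<Longrightarrow> e w \<le> e v"
    using tb \<open>C - A \<noteq> {}\<close> unfolding valid_tiebreak_def v_def by blast+
  have "OPT n E S k - F n E S (insert v A)
      \<le> (1 - 1 / real k) * (OPT n E S k - F n E S A) + 2 * \<delta> * OPT n E S k"
    by (rule greedy_gap_step[where e=e])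
      (use k A \<open>i < k\<close> v maximal accurate \<open>0 \<le> \<delta>\<close> in \<open>auto simp: C_def\<close>)
  then have "OPT n E S k - F n E S (insert v A)
      \<le> ((1 - 1 / real k) ^ Suc i + 2 * \<delta> * real (Suc i)) * OPT n E S k"
    using k \<open>0 \<le> \<delta>\<close> by (intro gap_recurrence_step[OF _ _ OPT_nonneg _ gap]) auto
  moreover have "card (insert v A) = Suc i"
    using v A by simp
  ultimately show ?thesis
    using A(1) v by (simp add: greedy_invariant_def v_def C_def)
qed

lemma prob_greedy_step_invariant:
  fixes \<delta> p :: real
  assumes n: "0 < n" and R: "0 < R" and k: "1 \<le> k" "k \<le> card ({..<n} - blue_set n S)"
    and tb: "valid_tiebreak ({..<n} - blue_set n S) tb" and \<delta>: "0 < \<delta>" "\<delta> \<le> 1"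
    and p: "2 * exp (- (real R * \<delta>\<^sup>2 / (4 * real n))) \<le> p"
    and inv: "greedy_invariant n E S k \<delta> i A" and "i < k"
  shows "1 - real n * p
    \<le> measure_pmf.prob (greedy_step n E S R tb A) {A'. greedy_invariant n E S k \<delta> (Suc i) A'}"
proof -
  define C where "C = {..<n} - blue_set n S"
  define Q where "Q = Pi_pmf (C - A) 0 (\<lambda>v. est_pmf n E S R (A \<union> {v}))"
  define Good where "Good = {e. \<forall>v\<in>C - A. \<bar>e v - F n E S (A \<union> {v})\<bar> \<le> \<delta> * F n E S (A \<union> {v})}"
  have "Good \<subseteq> (\<lambda>e. A \<union> {tb A e}) -` {A'. greedy_invariant n E S k \<delta> (Suc i) A'}"
    using greedy_invariant_Suc[OF k tb _ inv \<open>i < k\<close>] \<delta> by (auto simp: Good_def C_def)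
  then have "measure_pmf.prob Q Good
      \<le> measure_pmf.prob (greedy_step n E S R tb A) {A'. greedy_invariant n E S k \<delta> (Suc i) A'}"
    unfolding greedy_step_def Q_def C_def by (simp add: measure_pmf.finite_measure_mono)
  moreover have "1 - real n * p \<le> measure_pmf.prob Q Good"
    unfolding Q_def Good_def
    by (rule prob_estimates_accurate[OF n R _ _ \<delta> p])
      (use inv in \<open>auto simp: C_def greedy_invariant_def\<close>)
  ultimately show ?thesis
    by linarith
qed

lemma prob_greedy_iterate_invariant:
  fixes \<delta> p :: real
  assumes n: "0 < n" and R: "0 < R" and k: "1 \<le> k" "k \<le> card ({..<n} - blue_set n S)"
    and tb: "valid_tiebreak ({..<n} - blue_set n S) tb" and \<delta>: "0 < \<delta>" "\<delta> \<le> 1"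
    and p: "2 * exp (- (real R * \<delta>\<^sup>2 / (4 * real n))) \<le> p"
  shows "i \<le> k \<Longrightarrow> 1 - real i * (real n * p) \<le> measure_pmf.prob
    (((\<lambda>M. bind_pmf M (greedy_step n E S R tb)) ^^ i) (return_pmf {})) {A. greedy_invariant n E S k \<delta> i A}"
proof (induction i)
  case 0
  have "greedy_invariant n E S k \<delta> 0 {}"
    using F_nonneg[of n E S "{}"] OPT_nonneg[of n E S k] by (simp add: greedy_invariant_def)
  then show ?case by simp
next
  case (Suc i)
  have "0 \<le> real n * p"
    using order_trans[OF _ p] by simp
  then have "measure_pmf.prob (((\<lambda>M. bind_pmf M (greedy_step n E S R tb)) ^^ i) (return_pmf {}))
        {A. greedy_invariant n E S k \<delta> i A} - real n * p
      \<le> measure_pmf.prob (bind_pmf (((\<lambda>M. bind_pmf M (greedy_step n E S R tb)) ^^ i) (return_pmf {}))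
        (greedy_step n E S R tb)) {A. greedy_invariant n E S k \<delta> (Suc i) A}"
    by (rule prob_bind_lower_bound)
      (use prob_greedy_step_invariant[OF n R k tb \<delta> p] Suc.prems in auto)
  then show ?case
    using Suc by (simp add: algebra_simps)
qed

lemma one_minus_inverse_power_le_exp: "1 \<le> k \<Longrightarrow> (1 - 1 / real k) ^ k \<le> exp (-1)"
proof -
  assume k: "1 \<le> k"
  have "(1 - 1 / real k) ^ k \<le> exp (- (1 / real k)) ^ k"
    using k exp_ge_add_one_self[of "- (1 / real k)"] by (intro power_mono) auto
  also have "\<dots> = exp (-1)"
    using k by (simp add: exp_of_nat_mult[symmetric])
  finally show ?thesis .
qed

lemma greedy_invariant_approximation:
  assumes k: "1 \<le> k" and inv: "greedy_invariant n E S k (\<epsilon> / (2 * real k)) k A"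
  shows "(1 - 1 / exp 1 - \<epsilon>) * OPT n E S k \<le> F n E S A"
proof -
  have "OPT n E S k - F n E S A \<le> ((1 - 1 / real k) ^ k + \<epsilon>) * OPT n E S k"
    using inv k by (simp add: greedy_invariant_def)
  also have "\<dots> \<le> (exp (-1) + \<epsilon>) * OPT n E S k"
    using one_minus_inverse_power_le_exp[OF k] OPT_nonneg by (intro mult_right_mono) auto
  finally show ?thesis
    by (simp add: exp_minus field_simps)
qed

lemma num_sims_failure_bound:
  assumes n: "2 \<le> n" and k: "1 \<le> k" and \<epsilon>: "0 < \<epsilon>"
  defines "R \<equiv> num_sims n k \<epsilon>" and "\<delta> \<equiv> \<epsilon> / (2 * real k)"
  shows "0 < R" and "2 * exp (- (real R * \<delta>\<^sup>2 / (4 * real n))) \<le> 2 / real n ^ 5"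
proof -
  have ln_n: "0 < ln (real n)"
    using n by simp
  have R_ge: "81 * real n * real k ^ 2 * ln (real n) / \<epsilon> ^ 2 \<le> real R"
    using real_nat_ceiling_ge[of "27 * real n * real k ^ 2 * ln (real n ^ 3) / \<epsilon> ^ 2"]
    by (simp add: R_def num_sims_def ln_realpow)
  moreover have "0 < 81 * real n * real k ^ 2 * ln (real n) / \<epsilon> ^ 2"
    using n k \<epsilon> ln_n by simp
  ultimately show "0 < R"
    by linarith
  have "5 * ln (real n) \<le> 81 / 16 * ln (real n)"
    using ln_n by simp
  also have "81 / 16 * ln (real n) = (81 * real n * real k ^ 2 * ln (real n) / \<epsilon> ^ 2) * \<delta>\<^sup>2 / (4 * real n)"
    using n k \<epsilon> by (simp add: \<delta>_def field_simps power2_eq_square)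
  also have "\<dots> \<le> real R * \<delta>\<^sup>2 / (4 * real n)"
    using R_ge n by (intro divide_right_mono mult_right_mono) auto
  finally have "exp (- (real R * \<delta>\<^sup>2 / (4 * real n))) \<le> exp (- (real 5 * ln (real n)))"
    by simp
  also have "\<dots> = 1 / real n ^ 5"
    using n by (simp add: exp_minus exp_of_nat_mult divide_inverse del: of_nat_numeral)
  finally show "2 * exp (- (real R * \<delta>\<^sup>2 / (4 * real n))) \<le> 2 / real n ^ 5"
    by simp
qed

lemma prob_greedy_pmf_approximation:
  assumes \<epsilon>: "0 < \<epsilon>" "\<epsilon> < 1" and n: "2 \<le> n"
    and k: "1 \<le> k" "k \<le> card ({..<n} - blue_set n S)"
    and tb: "valid_tiebreak ({..<n} - blue_set n S) tb"
  shows "1 - 2 / real n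
    \<le> measure_pmf.prob (greedy_pmf n E S k \<epsilon> tb) {A. (1 - 1 / exp 1 - \<epsilon>) * OPT n E S k \<le> F n E S A}"
proof -
  define \<delta> where "\<delta> = \<epsilon> / (2 * real k)"
  have \<delta>: "0 < \<delta>" "\<delta> \<le> 1"
    using \<epsilon> k by (auto simp: \<delta>_def field_simps)
  have "k \<le> n"
    using k(2) card_mono[of "{..<n}" "{..<n} - blue_set n S"] by auto
  moreover have "real n \<le> real n ^ 3"
    using n by (intro self_le_power) auto
  ultimately have "real k * (real n * (2 / real n ^ 5)) \<le> real n ^ 3 * (real n * (2 / real n ^ 5))"
    by (intro mult_right_mono) auto
  also have "\<dots> = 2 / real n"
    using n by (simp add: field_simps eval_nat_numeral)
  finally have "real k * (real n * (2 / real n ^ 5)) \<le> 2 / real n" .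
  moreover have "1 - real k * (real n * (2 / real n ^ 5))
      \<le> measure_pmf.prob (greedy_pmf n E S k \<epsilon> tb) {A. greedy_invariant n E S k \<delta> k A}"
    unfolding greedy_pmf_def
    using num_sims_failure_bound[OF n k(1) \<epsilon>(1), folded \<delta>_def]
    by (intro prob_greedy_iterate_invariant[OF _ _ k tb \<delta>]) (use n in auto)
  moreover have "{A. greedy_invariant n E S k \<delta> k A}
      \<subseteq> {A. (1 - 1 / exp 1 - \<epsilon>) * OPT n E S k \<le> F n E S A}"
    using greedy_invariant_approximation[OF k(1)] by (auto simp: \<delta>_def)
  then have "measure_pmf.prob (greedy_pmf n E S k \<epsilon> tb) {A. greedy_invariant n E S k \<delta> k A}
      \<le> measure_pmf.prob (greedy_pmf n E S k \<epsilon> tb) {A. (1 - 1 / exp 1 - \<epsilon>) * OPT n E S k \<le> F n E S A}"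
    by (rule measure_pmf.finite_measure_mono) simp
  ultimately show ?thesis
    by linarith
qed

theorem theorem2p3:
  fixes \<epsilon> :: real
  assumes "0 < \<epsilon>" and "\<epsilon> < 1"
  shows "\<exists>\<delta> :: nat \<Rightarrow> real. \<delta> \<longlonglongrightarrow> 0 \<and>
    (\<forall>n E S k tb.
       E \<subseteq> {..<n} \<times> {..<n} \<and>
       (\<forall>v<n. S v \<noteq> Red) \<and>
       1 \<le> k \<and> k \<le> card ({..<n} - blue_set n S) \<and>
       valid_tiebreak ({..<n} - blue_set n S) tb \<longrightarrow>
       measure_pmf.prob (greedy_pmf n E S k \<epsilon> tb)
         {A. F n E S A \<ge> (1 - 1 / exp 1 - \<epsilon>) * OPT n E S k} \<ge> 1 - \<delta> n)"
proof (intro exI conjI allI impI)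
  show "(\<lambda>n. 2 / real n) \<longlonglongrightarrow> 0"
    by (rule lim_const_over_n)
  fix n E S k tb
  assume "E \<subseteq> {..<n} \<times> {..<n} \<and> (\<forall>v<n. S v \<noteq> Red) \<and> 1 \<le> k \<and>
    k \<le> card ({..<n} - blue_set n S) \<and> valid_tiebreak ({..<n} - blue_set n S) tb"
  then have k: "1 \<le> k" "k \<le> card ({..<n} - blue_set n S)"
    and tb: "valid_tiebreak ({..<n} - blue_set n S) tb"
    by auto
  show "1 - 2 / real n \<le> measure_pmf.prob (greedy_pmf n E S k \<epsilon> tb)
    {A. (1 - 1 / exp 1 - \<epsilon>) * OPT n E S k \<le> F n E S A}"
  proof (cases "2 \<le> n")
    case True
    then show ?thesis
      using prob_greedy_pmf_approximation[OF assms True k tb] by simp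
  next
    case False
    then have "1 - 2 / real n \<le> 0"
      using k by (cases "n = 0") auto
    then show ?thesis
      using measure_nonneg by (rule order_trans)
  qed
qed

end
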